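(* Let $K$ be a precubical set and $(\alpha,\beta)\in K_0\times K_0$. Any two execution paths in the same path-connected component of $\mathbb P^{top}_{\alpha,\beta}|K|^t_{reg}$ have the same $L_1$-arc length.
   Context: $\mathbf{Top}$: $\Delta$-generated spaces; $\mathbb P^{top}_{\alpha,\beta}X\subset\mathbf{TOP}([0,1],|X|)$ carries the $\Delta$-kelleyfication of the relative compact-open topology. Precubical sets: presheaves on the box category $\square$; $K_0$ vertices; $|K|_{geom}=\mathrm{colim}_{\square[n]\to K}[0,1]^n$; $|c|_{geom}:[0,1]^n\to|K|_{geom}$ for $c\in K_n$. A $d$-path of $[0,1]^n$ is a continuous map $[0,\ell]\to[0,1]^n$ nondecreasing in each coordinate, tame if its endpoints are in $\{0,1\}^n$; a $d$-path of $K$ is a Moore composition $(|c_1|_{geom}\circ\gamma_1)*\cdots*(|c_p|_{geom}\circ\gamma_p)$ of such, tame if the $\gamma_i$ can be chosen tame. Regular: constant on no interval $[a,b]$ with $a<b$. The $L_1$-arc length of a $d$-path $\gamma$ of $[0,1]^n$ between times $t\le t'$ is $\sum_i|\gamma_i(t')-\gamma_i(t)|$; for a $d$-path of $K$ the $L_1$-arc length is the sum over the pieces (well defined). $|K|^t_{reg}$ is the multipointed $d$-space with underlying space $|K|_{geom}$, states $K_0$, and execution paths the nonconstant tame regular $d$-paths $[0,1]\to|K|_{geom}$ between vertices; $\mathbb P^{top}_{\alpha,\beta}|K|^t_{reg}$ is the space of those from $\alpha$ to $\beta$. *)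

theory Defs
  imports "HOL-Analysis.Analysis" "HOL-Homology.Simplices"
begin

definition quotient_top :: "'a topology \<Rightarrow> ('a \<times> 'a) set \<Rightarrow> 'a set topology" where
  "quotient_top X r = topology (\<lambda>U. U \<subseteq> topspace X // r \<and> openin X (\<Union>U))"

definition cmaps :: "'a topology \<Rightarrow> 'b topology \<Rightarrow> ('a \<Rightarrow> 'b) set" where
  "cmaps X Y = {f. continuous_map X Y f \<and> f \<in> extensional (topspace X)}"

definition compact_open_top :: "'a topology \<Rightarrow> 'b topology \<Rightarrow> ('a \<Rightarrow> 'b) topology" where
  "compact_open_top X Y = topology_generated_by
     {{f \<in> cmaps X Y. f ` C \<subseteq> U} | C U. compactin X C \<and> openin Y U}"

definition delta_kelley :: "'a topology \<Rightarrow> 'a topology" where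
  "delta_kelley X = topology (\<lambda>U. U \<subseteq> topspace X \<and>
     (\<forall>p f. singular_simplex p X f \<longrightarrow>
        openin (subtopology (powertop_real UNIV) (standard_simplex p))
               {x \<in> standard_simplex p. f x \<in> U}))"

text \<open>A precubical set is given by sets of n-cubes K n and face maps d n i e : K n \<rightarrow> K (n-1),
  for 0-based coordinate index i < n and e = False/True standing for 0/1, satisfying the
  cubical identities.\<close>
definition precubical_set :: "(nat \<Rightarrow> 'a set) \<Rightarrow> (nat \<Rightarrow> nat \<Rightarrow> bool \<Rightarrow> 'a \<Rightarrow> 'a) \<Rightarrow> bool" where
  "precubical_set K d \<longleftrightarrow>
     (\<forall>n i e x. i < n \<and> x \<in> K n \<longrightarrow> d n i e x \<in> K (n - 1)) \<and>
     (\<forall>n i j a b x. i < j \<and> j < n \<and> x \<in> K n \<longrightarrow>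
        d (n - 1) i a (d n j b x) = d (n - 1) (j - 1) b (d n i a x))"

definition bval :: "bool \<Rightarrow> real" where
  "bval e = (if e then 1 else 0)"

definition cube_pts :: "nat \<Rightarrow> (nat \<Rightarrow> real) set" where
  "cube_pts n = {p \<in> PiE {..<n} (\<lambda>_. UNIV). \<forall>i<n. 0 \<le> p i \<and> p i \<le> 1}"

definition cube_top :: "nat \<Rightarrow> (nat \<Rightarrow> real) topology" where
  "cube_top n = subtopology (product_topology (\<lambda>_. euclideanreal) {..<n}) (cube_pts n)"

definition coface :: "nat \<Rightarrow> nat \<Rightarrow> bool \<Rightarrow> (nat \<Rightarrow> real) \<Rightarrow> (nat \<Rightarrow> real)" where
  "coface n i e p = (\<lambda>j. if j < i then p j else if j = i then bval e
                         else if j < n then p (j - 1) else undefined)"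

definition cells :: "(nat \<Rightarrow> 'a set) \<Rightarrow> (nat \<times> 'a) set" where
  "cells K = {(n, x). x \<in> K n}"

definition disj_cubes :: "(nat \<Rightarrow> 'a set) \<Rightarrow> ((nat \<times> 'a) \<times> (nat \<Rightarrow> real)) topology" where
  "disj_cubes K = sum_topology (\<lambda>c. cube_top (fst c)) (cells K)"

definition glue_rel :: "(nat \<Rightarrow> 'a set) \<Rightarrow> (nat \<Rightarrow> nat \<Rightarrow> bool \<Rightarrow> 'a \<Rightarrow> 'a)
    \<Rightarrow> (((nat \<times> 'a) \<times> (nat \<Rightarrow> real)) \<times> ((nat \<times> 'a) \<times> (nat \<Rightarrow> real))) set" where
  "glue_rel K d = {(((n - 1, d n i e x), p), ((n, x), coface n i e p)) | n i e x p.
                    i < n \<and> x \<in> K n \<and> p \<in> cube_pts (n - 1)}"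

definition glue_eq :: "(nat \<Rightarrow> 'a set) \<Rightarrow> (nat \<Rightarrow> nat \<Rightarrow> bool \<Rightarrow> 'a \<Rightarrow> 'a)
    \<Rightarrow> (((nat \<times> 'a) \<times> (nat \<Rightarrow> real)) \<times> ((nat \<times> 'a) \<times> (nat \<Rightarrow> real))) set" where
  "glue_eq K d = (glue_rel K d \<union> (glue_rel K d)\<inverse>)\<^sup>*"

definition geom_top :: "(nat \<Rightarrow> 'a set) \<Rightarrow> (nat \<Rightarrow> nat \<Rightarrow> bool \<Rightarrow> 'a \<Rightarrow> 'a)
    \<Rightarrow> ((nat \<times> 'a) \<times> (nat \<Rightarrow> real)) set topology" where
  "geom_top K d = quotient_top (disj_cubes K) (glue_eq K d)"

definition cell_map :: "(nat \<Rightarrow> 'a set) \<Rightarrow> (nat \<Rightarrow> nat \<Rightarrow> bool \<Rightarrow> 'a \<Rightarrow> 'a) \<Rightarrow> nat \<Rightarrow> 'a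
    \<Rightarrow> (nat \<Rightarrow> real) \<Rightarrow> ((nat \<times> 'a) \<times> (nat \<Rightarrow> real)) set" where
  "cell_map K d n c p = glue_eq K d `` {((n, c), p)}"

definition vertex_pt :: "(nat \<Rightarrow> 'a set) \<Rightarrow> (nat \<Rightarrow> nat \<Rightarrow> bool \<Rightarrow> 'a \<Rightarrow> 'a) \<Rightarrow> 'a
    \<Rightarrow> ((nat \<times> 'a) \<times> (nat \<Rightarrow> real)) set" where
  "vertex_pt K d a = cell_map K d 0 a (\<lambda>_. undefined)"

definition cube_dpath :: "nat \<Rightarrow> real \<Rightarrow> real \<Rightarrow> (real \<Rightarrow> (nat \<Rightarrow> real)) \<Rightarrow> bool" where
  "cube_dpath n a b g \<longleftrightarrow>
     continuous_map (top_of_set {a..b}) (cube_top n) g \<and>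
     (\<forall>i<n. mono_on {a..b} (\<lambda>t. g t i))"

definition cube_tame :: "nat \<Rightarrow> real \<Rightarrow> real \<Rightarrow> (real \<Rightarrow> (nat \<Rightarrow> real)) \<Rightarrow> bool" where
  "cube_tame n a b g \<longleftrightarrow> (\<forall>i<n. g a i \<in> {0, 1} \<and> g b i \<in> {0, 1})"

text \<open>A presentation of \<gamma> : [0,1] \<rightarrow> |K|_geom as a (Moore) composition
  (|c_1| o g_1) * ... * (|c_p| o g_p): the i-th piece lives on [ts i, ts (i+1)].\<close>
definition dpath_pres :: "bool \<Rightarrow> (nat \<Rightarrow> 'a set) \<Rightarrow> (nat \<Rightarrow> nat \<Rightarrow> bool \<Rightarrow> 'a \<Rightarrow> 'a)
    \<Rightarrow> (real \<Rightarrow> ((nat \<times> 'a) \<times> (nat \<Rightarrow> real)) set)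
    \<Rightarrow> nat \<Rightarrow> (nat \<Rightarrow> real) \<Rightarrow> (nat \<Rightarrow> nat \<times> 'a) \<Rightarrow> (nat \<Rightarrow> real \<Rightarrow> (nat \<Rightarrow> real)) \<Rightarrow> bool" where
  "dpath_pres tame K d \<gamma> p ts cs gs \<longleftrightarrow>
     1 \<le> p \<and> ts 0 = 0 \<and> ts p = 1 \<and> (\<forall>i<p. ts i < ts (Suc i)) \<and>
     (\<forall>i<p. cs i \<in> cells K \<and>
            cube_dpath (fst (cs i)) (ts i) (ts (Suc i)) (gs i) \<and>
            (tame \<longrightarrow> cube_tame (fst (cs i)) (ts i) (ts (Suc i)) (gs i)) \<and>
            (\<forall>t\<in>{ts i..ts (Suc i)}. \<gamma> t = cell_map K d (fst (cs i)) (snd (cs i)) (gs i t)))"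

definition dpath :: "bool \<Rightarrow> (nat \<Rightarrow> 'a set) \<Rightarrow> (nat \<Rightarrow> nat \<Rightarrow> bool \<Rightarrow> 'a \<Rightarrow> 'a)
    \<Rightarrow> (real \<Rightarrow> ((nat \<times> 'a) \<times> (nat \<Rightarrow> real)) set) \<Rightarrow> bool" where
  "dpath tame K d \<gamma> \<longleftrightarrow>
     continuous_map (top_of_set {0..1}) (geom_top K d) \<gamma> \<and>
     (\<exists>p ts cs gs. dpath_pres tame K d \<gamma> p ts cs gs)"

definition pres_L1_length :: "nat \<Rightarrow> (nat \<Rightarrow> real) \<Rightarrow> (nat \<Rightarrow> nat \<times> 'a)
    \<Rightarrow> (nat \<Rightarrow> real \<Rightarrow> (nat \<Rightarrow> real)) \<Rightarrow> real" where
  "pres_L1_length p ts cs gs =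
     (\<Sum>i<p. \<Sum>j<fst (cs i). \<bar>gs i (ts (Suc i)) j - gs i (ts i) j\<bar>)"

text \<open>L1-arc length of a d-path of K (well defined, i.e. independent of the presentation).\<close>
definition L1_length :: "(nat \<Rightarrow> 'a set) \<Rightarrow> (nat \<Rightarrow> nat \<Rightarrow> bool \<Rightarrow> 'a \<Rightarrow> 'a)
    \<Rightarrow> (real \<Rightarrow> ((nat \<times> 'a) \<times> (nat \<Rightarrow> real)) set) \<Rightarrow> real" where
  "L1_length K d \<gamma> = (THE l. \<exists>p ts cs gs. dpath_pres False K d \<gamma> p ts cs gs \<and>
                                            l = pres_L1_length p ts cs gs)"

definition regular_path :: "(real \<Rightarrow> 'b) \<Rightarrow> bool" where
  "regular_path \<gamma> \<longleftrightarrow> (\<forall>a b. 0 \<le> a \<and> a < b \<and> b \<le> 1 \<longrightarrow> \<not> (\<forall>t\<in>{a..b}. \<gamma> t = \<gamma> a))"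

definition exec_paths :: "(nat \<Rightarrow> 'a set) \<Rightarrow> (nat \<Rightarrow> nat \<Rightarrow> bool \<Rightarrow> 'a \<Rightarrow> 'a) \<Rightarrow> 'a \<Rightarrow> 'a
    \<Rightarrow> (real \<Rightarrow> ((nat \<times> 'a) \<times> (nat \<Rightarrow> real)) set) set" where
  "exec_paths K d \<alpha> \<beta> = {\<gamma> \<in> extensional {0..1}.
      dpath True K d \<gamma> \<and> regular_path \<gamma> \<and> (\<exists>s\<in>{0..1}. \<exists>t\<in>{0..1}. \<gamma> s \<noteq> \<gamma> t) \<and>
      \<gamma> 0 = vertex_pt K d \<alpha> \<and> \<gamma> 1 = vertex_pt K d \<beta>}"

definition Ptop :: "(nat \<Rightarrow> 'a set) \<Rightarrow> (nat \<Rightarrow> nat \<Rightarrow> bool \<Rightarrow> 'a \<Rightarrow> 'a) \<Rightarrow> 'a \<Rightarrow> 'a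
    \<Rightarrow> (real \<Rightarrow> ((nat \<times> 'a) \<times> (nat \<Rightarrow> real)) set) topology" where
  "Ptop K d \<alpha> \<beta> = delta_kelley (subtopology
      (compact_open_top (top_of_set {0..1}) (geom_top K d)) (exec_paths K d \<alpha> \<beta>))"

end

theory Submission
  imports Defs
begin

text \<open>
  The map sending a point p of a cube [0,1]^n to exp(2\<pi>i(p_1 + ... + p_n)) is compatible with the
  face maps, which insert a coordinate equal to 0 or 1, so it descends to a continuous map
  \<phi> : |K|_geom \<rightarrow> S^1 sending every vertex to 1. Along a d-path of a cube the coordinate sum
  increases by exactly the L1-arc length, hence 2\<pi>i times the L1-arc length of a d-path \<gamma> of K is
  the increment of any continuous logarithm of \<phi> \<circ> \<gamma>.

  A path H from \<gamma>1 to \<gamma>2 in the path space is jointly continuous on the square (the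
  Delta-kelleyfication only refines the compact-open topology, and [0,1] is locally compact),
  so it is a homotopy fixing the end vertices. A continuous logarithm of \<phi> \<circ> H on the square
  has endpoint increments in 2\<pi>i\<int> depending continuously on the homotopy parameter, so they
  are constant.
\<close>

section \<open>Quotient, Delta-kelleyfied and compact-open topologies\<close>

lemma istopology_quotient_top:
  assumes "equiv UNIV r"
  shows "istopology (\<lambda>U. U \<subseteq> T // r \<and> openin X (\<Union>U))"
  unfolding istopology_def
proof (rule conjI; intro allI impI)
  fix S V assume S: "S \<subseteq> T // r \<and> openin X (\<Union>S)" and V: "V \<subseteq> T // r \<and> openin X (\<Union>V)"
  have "\<Union>(S \<inter> V) = \<Union>S \<inter> \<Union>V"
  proof
    show "\<Union>S \<inter> \<Union>V \<subseteq> \<Union>(S \<inter> V)"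
    proof
      fix z assume "z \<in> \<Union>S \<inter> \<Union>V"
      then obtain A B where A: "A \<in> S" "z \<in> A" and B: "B \<in> V" "z \<in> B" by blast
      have "A \<in> UNIV // r" "B \<in> UNIV // r" using A B S V by (auto simp: quotient_def)
      with A B have "A = B" using quotient_disj[OF assms] by blast
      with A B show "z \<in> \<Union>(S \<inter> V)" by blast
    qed
  qed blast
  with S V show "S \<inter> V \<subseteq> T // r \<and> openin X (\<Union>(S \<inter> V))" by auto
next
  fix \<U> assume "\<forall>U\<in>\<U>. U \<subseteq> T // r \<and> openin X (\<Union>U)"
  moreover have "\<Union>(\<Union>\<U>) = (\<Union>U\<in>\<U>. \<Union>U)" by auto
  ultimately show "\<Union>\<U> \<subseteq> T // r \<and> openin X (\<Union>(\<Union>\<U>))" by auto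
qed

lemma openin_quotient_top:
  assumes "equiv UNIV r"
  shows "openin (quotient_top X r) U \<longleftrightarrow> U \<subseteq> topspace X // r \<and> openin X (\<Union>U)"
  unfolding quotient_top_def using istopology_quotient_top[OF assms] by simp

lemma topspace_quotient_top:
  assumes "equiv UNIV r" and "\<And>x y. (x, y) \<in> r \<Longrightarrow> x \<in> topspace X \<Longrightarrow> y \<in> topspace X"
  shows "topspace (quotient_top X r) = topspace X // r"
proof -
  have "\<Union>(topspace X // r) = topspace X"
    using assms equiv_class_self[OF assms(1)] by (auto simp: quotient_def)
  then have "openin (quotient_top X r) (topspace X // r)"
    by (simp add: openin_quotient_top[OF assms(1)])
  then show ?thesis
    using openin_subset openin_quotient_top[OF assms(1), of X "topspace (quotient_top X r)"] by blast
qed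

lemma continuous_map_quotient_top:
  assumes r: "equiv UNIV r" and r_topspace: "\<And>x y. (x, y) \<in> r \<Longrightarrow> x \<in> topspace X \<Longrightarrow> y \<in> topspace X"
    and f: "continuous_map X Y f" and f_r: "\<And>x y. (x, y) \<in> r \<Longrightarrow> f x = f y"
  shows "continuous_map (quotient_top X r) Y (\<lambda>S. f (SOME x. x \<in> S))"
proof -
  have f_class: "f (SOME y. y \<in> r `` {x}) = f x" for x
  proof -
    have "(x, SOME y. y \<in> r `` {x}) \<in> r"
      using someI[of "\<lambda>y. y \<in> r `` {x}" x] equiv_class_self[OF r] by simp
    then show ?thesis by (metis f_r)
  qed
  have classes: "topspace (quotient_top X r) = topspace X // r"
    by (rule topspace_quotient_top[OF r r_topspace])
  show ?thesis
    unfolding continuous_map_def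
  proof (intro conjI allI impI)
    show "(\<lambda>S. f (SOME x. x \<in> S)) \<in> topspace (quotient_top X r) \<rightarrow> topspace Y"
    proof
      fix S assume "S \<in> topspace (quotient_top X r)"
      then obtain x where "x \<in> topspace X" "S = r `` {x}" unfolding classes by (auto elim: quotientE)
      then show "f (SOME x. x \<in> S) \<in> topspace Y"
        using f f_class by (simp add: continuous_map_def Pi_iff)
    qed
    fix W assume W: "openin Y W"
    have "\<Union>{S \<in> topspace X // r. f (SOME x. x \<in> S) \<in> W} = {x \<in> topspace X. f x \<in> W}"
    proof
      show "\<Union>{S \<in> topspace X // r. f (SOME x. x \<in> S) \<in> W} \<subseteq> {x \<in> topspace X. f x \<in> W}"
      proof
        fix x assume "x \<in> \<Union>{S \<in> topspace X // r. f (SOME x. x \<in> S) \<in> W}"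
        then obtain y where "y \<in> topspace X" "(y, x) \<in> r" "f (SOME z. z \<in> r `` {y}) \<in> W"
          by (auto simp: quotient_def)
        then show "x \<in> {x \<in> topspace X. f x \<in> W}"
          using r_topspace f_r f_class by fastforce
      qed
      show "{x \<in> topspace X. f x \<in> W} \<subseteq> \<Union>{S \<in> topspace X // r. f (SOME x. x \<in> S) \<in> W}"
      proof
        fix x assume "x \<in> {x \<in> topspace X. f x \<in> W}"
        then have "r `` {x} \<in> {S \<in> topspace X // r. f (SOME x. x \<in> S) \<in> W}"
          using f_class by (auto simp: quotient_def)
        then show "x \<in> \<Union>{S \<in> topspace X // r. f (SOME x. x \<in> S) \<in> W}"
          using equiv_class_self[OF r] by blast
      qed
    qed
    moreover have "openin X {x \<in> topspace X. f x \<in> W}"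
      using f W by (rule openin_continuous_map_preimage)
    ultimately show "openin (quotient_top X r) {S \<in> topspace (quotient_top X r). f (SOME x. x \<in> S) \<in> W}"
      unfolding classes openin_quotient_top[OF r] by auto
  qed
qed

lemma istopology_delta_kelley:
  "istopology (\<lambda>U. U \<subseteq> topspace X \<and>
     (\<forall>p f. singular_simplex p X f \<longrightarrow>
        openin (subtopology (powertop_real UNIV) (standard_simplex p))
               {x \<in> standard_simplex p. f x \<in> U}))"
proof -
  have preimage_Int: "{x \<in> A. f x \<in> S \<inter> T} = {x \<in> A. f x \<in> S} \<inter> {x \<in> A. f x \<in> T}"
    and preimage_Union: "{x \<in> A. f x \<in> \<Union>\<U>} = (\<Union>U\<in>\<U>. {x \<in> A. f x \<in> U})"
    for A :: "'b set" and f :: "'b \<Rightarrow> 'a" and S T \<U> by auto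
  show ?thesis
    unfolding istopology_def preimage_Int preimage_Union by (auto intro!: openin_Int openin_Union)
qed

lemma openin_delta_kelley:
  "openin (delta_kelley X) U \<longleftrightarrow> U \<subseteq> topspace X \<and>
     (\<forall>p f. singular_simplex p X f \<longrightarrow>
        openin (subtopology (powertop_real UNIV) (standard_simplex p))
               {x \<in> standard_simplex p. f x \<in> U})"
  unfolding delta_kelley_def using topology_inverse'[OF istopology_delta_kelley[of X]] by simp

lemma openin_delta_kelley_if_openin:
  assumes "openin X U"
  shows "openin (delta_kelley X) U"
  unfolding openin_delta_kelley
proof (intro conjI allI impI)
  show "U \<subseteq> topspace X"
    using assms by (rule openin_subset)
  fix p f assume "singular_simplex p X f"
  then have "continuous_map (subtopology (powertop_real UNIV) (standard_simplex p)) X f"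
    unfolding singular_simplex_def by blast
  from openin_continuous_map_preimage[OF this assms]
  show "openin (subtopology (powertop_real UNIV) (standard_simplex p)) {x \<in> standard_simplex p. f x \<in> U}"
    by (simp add: topspace_product_topology)
qed

lemma topspace_delta_kelley: "topspace (delta_kelley X) = topspace X"
proof
  show "topspace X \<subseteq> topspace (delta_kelley X)"
    using openin_subset[OF openin_delta_kelley_if_openin[OF openin_topspace[of X]]] .
  show "topspace (delta_kelley X) \<subseteq> topspace X"
    using openin_delta_kelley[of X "topspace (delta_kelley X)"] by simp
qed

lemma continuous_map_from_delta_kelley_target:
  assumes "continuous_map Z (delta_kelley X) h"
  shows "continuous_map Z X h"
  using assms openin_delta_kelley_if_openin
  unfolding continuous_map_def topspace_delta_kelley by blast

lemma openin_compact_open_top_basic: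
  assumes "compactin X C" and "openin Y U"
  shows "openin (compact_open_top X Y) {f \<in> cmaps X Y. f ` C \<subseteq> U}"
  unfolding compact_open_top_def openin_topology_generated_by_iff
  by (rule generate_topology_on.Basis) (use assms in blast)

lemma continuous_map_uncurry_compact_open_top:
  fixes h :: "'a::metric_space \<Rightarrow> 'b::heine_borel \<Rightarrow> 'c"
  assumes T: "closed T" and h: "continuous_map (top_of_set S) (compact_open_top (top_of_set T) Y) h"
  shows "continuous_map (top_of_set (S \<times> T)) Y (\<lambda>z. h (fst z) (snd z))"
proof -
  have h_cmaps: "h s \<in> cmaps (top_of_set T) Y" if "s \<in> S" for s
    using h that unfolding continuous_map_def compact_open_top_def by auto
  then have h_cont: "continuous_map (top_of_set T) Y (h s)" if "s \<in> S" for s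
    using that unfolding cmaps_def by blast
  show ?thesis
    unfolding continuous_map_def
  proof (intro conjI allI impI)
    show "(\<lambda>z. h (fst z) (snd z)) \<in> topspace (top_of_set (S \<times> T)) \<rightarrow> topspace Y"
      using h_cont unfolding continuous_map_def by (auto simp: Pi_iff)
    fix U assume U: "openin Y U"
    show "openin (top_of_set (S \<times> T)) {z \<in> topspace (top_of_set (S \<times> T)). h (fst z) (snd z) \<in> U}"
      unfolding openin_subopen[of _ "{z \<in> topspace (top_of_set (S \<times> T)). h (fst z) (snd z) \<in> U}"]
    proof (intro ballI)
      fix z0 assume "z0 \<in> {z \<in> topspace (top_of_set (S \<times> T)). h (fst z) (snd z) \<in> U}"
      then obtain s0 t0 where z0: "z0 = (s0, t0)" "s0 \<in> S" "t0 \<in> T" "h s0 t0 \<in> U"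
        by (cases z0) auto
      have "openin (top_of_set T) {t \<in> T. h s0 t \<in> U}"
        using openin_continuous_map_preimage[OF h_cont[OF \<open>s0 \<in> S\<close>] U] by simp
      then obtain e where e: "e > 0" "\<forall>t\<in>T. dist t t0 < e \<longrightarrow> h s0 t \<in> U"
        unfolding openin_euclidean_subtopology_iff using z0 by force
      define C where "C = T \<inter> cball t0 (e/2)"
      have "compactin (top_of_set T) C"
        unfolding compactin_subtopology C_def using T by (auto intro: closed_Int_compact)
      then have "openin (compact_open_top (top_of_set T) Y) {f \<in> cmaps (top_of_set T) Y. f ` C \<subseteq> U}"
        using U by (rule openin_compact_open_top_basic)
      then have "openin (top_of_set S) {s \<in> S. h s \<in> cmaps (top_of_set T) Y \<and> h s ` C \<subseteq> U}"
        using openin_continuous_map_preimage[OF h] by force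
      moreover have "h s0 ` C \<subseteq> U"
        using e unfolding C_def by (auto simp: dist_commute)
      ultimately obtain \<delta> where \<delta>: "\<delta> > 0" "\<forall>s\<in>S. dist s s0 < \<delta> \<longrightarrow> h s ` C \<subseteq> U"
        unfolding openin_euclidean_subtopology_iff using z0 h_cmaps by force
      define N where "N = (S \<times> T) \<inter> ball z0 (min \<delta> (e/2))"
      have "openin (top_of_set (S \<times> T)) N"
        unfolding N_def by (intro openin_open_Int) auto
      moreover have "z0 \<in> N"
        unfolding N_def using z0 \<delta> e by auto
      moreover have "N \<subseteq> {z \<in> topspace (top_of_set (S \<times> T)). h (fst z) (snd z) \<in> U}"
      proof
        fix z assume z: "z \<in> N"
        then have "dist (fst z) s0 < \<delta>" "snd z \<in> C"
          using dist_fst_le[of z z0] dist_snd_le[of z z0] z0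
          unfolding N_def C_def by (auto simp: dist_commute)
        then show "z \<in> {z \<in> topspace (top_of_set (S \<times> T)). h (fst z) (snd z) \<in> U}"
          using \<delta> z unfolding N_def by (auto simp: mem_Times_iff)
      qed
      ultimately show "\<exists>N. openin (top_of_set (S \<times> T)) N \<and> z0 \<in> N \<and>
          N \<subseteq> {z \<in> topspace (top_of_set (S \<times> T)). h (fst z) (snd z) \<in> U}"
        by blast
    qed
  qed
qed

lemma continuous_map_from_sum_topology:
  assumes "\<And>i. i \<in> I \<Longrightarrow> continuous_map (X i) Y (\<lambda>x. f (i, x))"
  shows "continuous_map (sum_topology X I) Y f"
  unfolding continuous_map_def
proof (intro conjI allI impI)
  show "f \<in> topspace (sum_topology X I) \<rightarrow> topspace Y"
    using assms by (force simp: continuous_map_def)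
  fix W assume W: "openin Y W"
  have "openin (X i) {x. (i, x) \<in> {z \<in> topspace (sum_topology X I). f z \<in> W}}" if "i \<in> I" for i
    using openin_continuous_map_preimage[OF assms[OF that] W] that by simp
  then show "openin (sum_topology X I) {z \<in> topspace (sum_topology X I). f z \<in> W}"
    unfolding openin_sum_topology by auto
qed

section \<open>Continuous logarithms\<close>

lemma exp_eq_1_norm_diff_ge:
  fixes a b :: complex
  assumes "exp a = 1" and "exp b = 1" and "a \<noteq> b"
  shows "2 * pi \<le> norm (b - a)"
proof -
  obtain m n :: int where a: "Re a = 0" "Im a = of_int (2 * m) * pi"
    and b: "Re b = 0" "Im b = of_int (2 * n) * pi"
    using assms(1,2) unfolding exp_eq_1 by blast
  with assms(3) have "m \<noteq> n"
    by (auto simp: complex_eq_iff)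
  then have "2 * pi * 1 \<le> 2 * pi * \<bar>of_int (n - m)\<bar>"
    by (intro mult_left_mono) auto
  also have "\<dots> = \<bar>Im (b - a)\<bar>"
  proof -
    have "Im (b - a) = 2 * pi * of_int (n - m)"
      using a b by (simp add: algebra_simps)
    then show ?thesis
      by (simp add: abs_mult)
  qed
  also have "\<dots> \<le> norm (b - a)"
    by (rule abs_Im_le_cmod)
  finally show ?thesis
    by simp
qed

lemma continuous_on_exp_eq_1_imp_eq:
  fixes k :: "'a::topological_space \<Rightarrow> complex"
  assumes "connected S" and "continuous_on S k" and "\<And>x. x \<in> S \<Longrightarrow> exp (k x) = 1"
    and "x \<in> S" and "y \<in> S"
  shows "k x = k y"
proof -
  have "k constant_on S"
  proof (rule continuous_discrete_range_constant[OF assms(1,2)])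
    fix x assume "x \<in> S"
    then show "\<exists>e>0. \<forall>y. y \<in> S \<and> k y \<noteq> k x \<longrightarrow> e \<le> norm (k y - k x)"
      using exp_eq_1_norm_diff_ge assms(3) by (intro exI[of _ "2 * pi"]) auto
  qed
  then show ?thesis
    using assms(4,5) unfolding constant_on_def by metis
qed

lemma continuous_logarithm_increment:
  fixes g :: "real \<Rightarrow> complex" and f :: "real \<Rightarrow> real"
  assumes "a \<le> b" and "continuous_on {a..b} g" and "continuous_on {a..b} f"
    and "\<And>t. t \<in> {a..b} \<Longrightarrow> exp (g t) = exp (of_real (2 * pi * f t) * \<i>)"
  shows "g b - g a = of_real (2 * pi * (f b - f a)) * \<i>"
proof -
  define k where "k t = of_real (2 * pi * f t) * \<i> - g t" for t
  have "continuous_on {a..b} k"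
    unfolding k_def by (intro continuous_on_diff continuous_on_mult_right continuous_on_of_real
        continuous_on_mult_left assms(2,3))
  moreover have "exp (k t) = 1" if "t \<in> {a..b}" for t
    unfolding k_def using assms(4)[OF that] by (simp add: exp_diff)
  ultimately have "k a = k b"
    using assms(1) by (intro continuous_on_exp_eq_1_imp_eq[of "{a..b}"]) auto
  then show ?thesis
    unfolding k_def by (simp add: algebra_simps)
qed

section \<open>The phase map of the geometric realization\<close>

definition cube_phase :: "((nat \<times> 'a) \<times> (nat \<Rightarrow> real)) \<Rightarrow> complex" where
  "cube_phase x = exp (of_real (2 * pi * (\<Sum>j<fst (fst x). snd x j)) * \<i>)"

text \<open>Any representative of a gluing class may be chosen, by cube_phase_glue_eq below.\<close>
definition realization_phase :: "((nat \<times> 'a) \<times> (nat \<Rightarrow> real)) set \<Rightarrow> complex" where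
  "realization_phase S = cube_phase (SOME x. x \<in> S)"

lemma sum_coface:
  assumes "i < n"
  shows "(\<Sum>j<n. coface n i e p j) = bval e + (\<Sum>j<n - 1. p j)"
proof -
  have split: "(\<Sum>j<n. f j) = (\<Sum>j<i. f j) + f i + (\<Sum>j=Suc i..<n. f j)" for f :: "nat \<Rightarrow> real"
    using assms sum.atLeastLessThan_concat[of 0 i n f] sum.atLeast_Suc_lessThan[of i n f]
    by (simp add: atLeast0LessThan)
  have "(\<Sum>j<i. coface n i e p j) = (\<Sum>j<i. p j)"
    by (simp add: coface_def)
  moreover have "(\<Sum>j=Suc i..<n. coface n i e p j) = (\<Sum>j=Suc i..<n. p (j - 1))"
    by (rule sum.cong) (auto simp: coface_def)
  moreover have "(\<Sum>j=Suc i..<n. p (j - 1)) = (\<Sum>j=i..<n - 1. p j)"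
    using assms sum.shift_bounds_Suc_ivl[of "\<lambda>j. p (j - 1)" i "n - 1"] by simp
  moreover have "(\<Sum>j<i. p j) + (\<Sum>j=i..<n - 1. p j) = (\<Sum>j<n - 1. p j)"
    using assms sum.atLeastLessThan_concat[of 0 i "n - 1" p] by (simp add: atLeast0LessThan)
  ultimately show ?thesis
    using split[of "coface n i e p"] by (simp add: coface_def)
qed

lemma cube_phase_glue_rel:
  assumes "(x, y) \<in> glue_rel K d"
  shows "cube_phase x = cube_phase y"
proof -
  obtain n i e c p where x: "x = ((n - 1, d n i e c), p)" and y: "y = ((n, c), coface n i e p)"
    and "i < n"
    using assms unfolding glue_rel_def by blast
  then have "cube_phase y = exp (of_real (2 * pi * bval e) * \<i>) * cube_phase x"
    using sum_coface[of i n e p]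
    by (simp add: cube_phase_def distrib_left exp_add[symmetric] algebra_simps)
  moreover have "exp (of_real (2 * pi * bval e) * \<i>) = 1"
    by (simp add: bval_def exp_eq_1)
  ultimately show ?thesis
    by simp
qed

lemma cube_phase_glue_eq:
  assumes "(x, y) \<in> glue_eq K d"
  shows "cube_phase x = cube_phase y"
  using assms unfolding glue_eq_def
  by (induction rule: rtrancl_induct) (auto dest: cube_phase_glue_rel)

lemma equiv_glue_eq: "equiv UNIV (glue_eq K d)"
  unfolding glue_eq_def equiv_def
  by (auto simp: refl_rtrancl sym_rtrancl sym_Un_converse trans_rtrancl)

lemma topspace_cube_top: "topspace (cube_top n) = cube_pts n"
  unfolding cube_top_def cube_pts_def by (auto simp: topspace_product_topology)

lemma coface_in_cube_pts:
  assumes "i < n" and "p \<in> cube_pts (n - 1)"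
  shows "coface n i e p \<in> cube_pts n"
  using assms unfolding cube_pts_def coface_def bval_def by (auto simp: PiE_def extensional_def)

lemma glue_rel_topspace:
  assumes "precubical_set K d" and "(x, y) \<in> glue_rel K d"
  shows "x \<in> topspace (disj_cubes K)" and "y \<in> topspace (disj_cubes K)"
proof -
  obtain n i e c p where x: "x = ((n - 1, d n i e c), p)" and y: "y = ((n, c), coface n i e p)"
    and i: "i < n" and c: "c \<in> K n" and p: "p \<in> cube_pts (n - 1)"
    using assms(2) unfolding glue_rel_def by blast
  have "d n i e c \<in> K (n - 1)"
    using assms(1) i c unfolding precubical_set_def by blast
  then show "x \<in> topspace (disj_cubes K)" and "y \<in> topspace (disj_cubes K)"
    using x y c p coface_in_cube_pts[OF i p]
    by (simp_all add: disj_cubes_def topspace_cube_top cells_def)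
qed

lemma glue_eq_topspace:
  assumes "precubical_set K d" and "(x, y) \<in> glue_eq K d" and "x \<in> topspace (disj_cubes K)"
  shows "y \<in> topspace (disj_cubes K)"
  using assms(2,3) unfolding glue_eq_def
  by (induction rule: rtrancl_induct) (auto dest: glue_rel_topspace[OF assms(1)])

lemma continuous_map_cube_phase: "continuous_map (disj_cubes K) euclidean cube_phase"
  unfolding disj_cubes_def
proof (rule continuous_map_from_sum_topology)
  fix c :: "nat \<times> 'a"
  have "continuous_map (cube_top (fst c)) euclideanreal (\<lambda>p. p j)" if "j < fst c" for j
    unfolding cube_top_def using that
    by (intro continuous_map_from_subtopology continuous_map_product_projection) auto
  then have "continuous_map (cube_top (fst c)) euclideanreal (\<lambda>p. 2 * pi * (\<Sum>j<fst c. p j))"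
    by (intro continuous_map_real_mult_left continuous_map_sum) auto
  moreover have "continuous_map euclideanreal euclidean (\<lambda>x. exp (of_real x * \<i>))"
    by (auto simp: continuous_map_iff_continuous2 intro!: continuous_intros)
  ultimately have "continuous_map (cube_top (fst c)) euclidean
      ((\<lambda>x. exp (of_real x * \<i>)) \<circ> (\<lambda>p. 2 * pi * (\<Sum>j<fst c. p j)))"
    by (rule continuous_map_compose)
  then show "continuous_map (cube_top (fst c)) euclidean (\<lambda>p. cube_phase (c, p))"
    by (simp add: cube_phase_def o_def)
qed

lemma continuous_map_realization_phase:
  assumes "precubical_set K d"
  shows "continuous_map (geom_top K d) euclidean realization_phase"
  unfolding geom_top_def realization_phase_def
  using continuous_map_quotient_top[OF equiv_glue_eq glue_eq_topspace[OF assms]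
      continuous_map_cube_phase cube_phase_glue_eq]
  by simp

lemma realization_phase_cell_map: "realization_phase (cell_map K d n c p) = cube_phase ((n, c), p)"
proof -
  have "(((n, c), p), SOME y. y \<in> glue_eq K d `` {((n, c), p)}) \<in> glue_eq K d"
    using someI[of "\<lambda>y. y \<in> glue_eq K d `` {((n, c), p)}"] equiv_class_self[OF equiv_glue_eq]
    by blast
  then show ?thesis
    unfolding realization_phase_def cell_map_def by (metis cube_phase_glue_eq)
qed

lemma realization_phase_vertex_pt: "realization_phase (vertex_pt K d a) = 1"
  unfolding vertex_pt_def realization_phase_cell_map cube_phase_def by simp

lemma realization_phase_nonzero: "realization_phase S \<noteq> 0"
  unfolding realization_phase_def cube_phase_def by simp

section \<open>L1-arc length as the increment of a logarithm\<close>

lemma continuous_on_cube_dpath_coordinate: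
  assumes "cube_dpath n a b g" and "j < n"
  shows "continuous_on {a..b} (\<lambda>t. g t j)"
proof -
  have "continuous_map (cube_top n) euclideanreal (\<lambda>p. p j)"
    unfolding cube_top_def using assms(2)
    by (intro continuous_map_from_subtopology continuous_map_product_projection) auto
  moreover have "continuous_map (top_of_set {a..b}) (cube_top n) g"
    using assms(1) unfolding cube_dpath_def by blast
  ultimately have "continuous_map (top_of_set {a..b}) euclideanreal ((\<lambda>p. p j) \<circ> g)"
    by (rule continuous_map_compose[rotated])
  then show ?thesis
    by (simp add: o_def)
qed

lemma dpath_pres_times_mono:
  assumes "dpath_pres tame K d \<gamma> p ts cs gs" and "i \<le> j" and "j \<le> p"
  shows "ts i \<le> ts j"
  using assms lift_Suc_mono_le_ivl[of "{..<p}" ts i j] unfolding dpath_pres_def by force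

lemma logarithm_increment_eq_piece_L1_length:
  assumes pres: "dpath_pres tame K d \<gamma> p ts cs gs" and i: "i < p" and g: "continuous_on {0..1} g"
    and log: "\<And>t. t \<in> {0..1} \<Longrightarrow> realization_phase (\<gamma> t) = exp (g t)"
  shows "g (ts (Suc i)) - g (ts i)
      = of_real (2 * pi * (\<Sum>j<fst (cs i). \<bar>gs i (ts (Suc i)) j - gs i (ts i) j\<bar>)) * \<i>"
proof -
  let ?a = "ts i" and ?b = "ts (Suc i)" and ?n = "fst (cs i)" and ?c = "snd (cs i)"
  have ab: "?a < ?b"
    using pres i unfolding dpath_pres_def by blast
  have sub: "{?a..?b} \<subseteq> {0..1}"
    using dpath_pres_times_mono[OF pres, of 0 i] dpath_pres_times_mono[OF pres, of "Suc i" p] pres i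
    unfolding dpath_pres_def by simp
  have dp: "cube_dpath ?n ?a ?b (gs i)"
    and \<gamma>: "\<And>t. t \<in> {?a..?b} \<Longrightarrow> \<gamma> t = cell_map K d ?n ?c (gs i t)"
    using pres i unfolding dpath_pres_def by auto
  have "g ?b - g ?a = of_real (2 * pi * ((\<Sum>j<?n. gs i ?b j) - (\<Sum>j<?n. gs i ?a j))) * \<i>"
  proof (rule continuous_logarithm_increment)
    show "continuous_on {?a..?b} g"
      using g sub by (rule continuous_on_subset)
    show "continuous_on {?a..?b} (\<lambda>t. \<Sum>j<?n. gs i t j)"
      using continuous_on_cube_dpath_coordinate[OF dp] by (intro continuous_on_sum) auto
    show "exp (g t) = exp (of_real (2 * pi * (\<Sum>j<?n. gs i t j)) * \<i>)" if "t \<in> {?a..?b}" for t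
      using log[of t] \<gamma>[OF that] that sub by (auto simp: realization_phase_cell_map cube_phase_def)
  qed (use ab in simp)
  moreover have "gs i ?a j \<le> gs i ?b j" if "j < ?n" for j
    using dp that ab unfolding cube_dpath_def by (auto intro: mono_onD)
  then have "(\<Sum>j<?n. gs i ?b j) - (\<Sum>j<?n. gs i ?a j) = (\<Sum>j<?n. \<bar>gs i ?b j - gs i ?a j\<bar>)"
    by (simp add: sum_subtractf[symmetric])
  ultimately show ?thesis
    by simp
qed

lemma logarithm_increment_eq_pres_L1_length:
  assumes pres: "dpath_pres tame K d \<gamma> p ts cs gs" and g: "continuous_on {0..1} g"
    and log: "\<And>t. t \<in> {0..1} \<Longrightarrow> realization_phase (\<gamma> t) = exp (g t)"
  shows "g 1 - g 0 = of_real (2 * pi * pres_L1_length p ts cs gs) * \<i>"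
proof -
  have "ts 0 = 0" and "ts p = 1"
    using pres unfolding dpath_pres_def by auto
  then have "g 1 - g 0 = (\<Sum>i<p. g (ts (Suc i)) - g (ts i))"
    using sum_lessThan_telescope[of "\<lambda>i. g (ts i)" p] by simp
  also have "\<dots> = of_real (2 * pi * pres_L1_length p ts cs gs) * \<i>"
    unfolding pres_L1_length_def using logarithm_increment_eq_piece_L1_length[OF pres _ g log]
    by (simp add: sum_distrib_left sum_distrib_right)
  finally show ?thesis .
qed

text \<open>
  L1_length is a definite description over all presentations; each of them has length
  (g 1 - g 0) / 2\<pi>i, so the description is proper.
\<close>

lemma L1_length_eq_logarithm_increment:
  assumes "dpath tame K d \<gamma>" and g: "continuous_on {0..1} g"
    and log: "\<And>t. t \<in> {0..1} \<Longrightarrow> realization_phase (\<gamma> t) = exp (g t)"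
  shows "of_real (2 * pi * L1_length K d \<gamma>) * \<i> = g 1 - g 0"
proof -
  obtain p ts cs gs where "dpath_pres tame K d \<gamma> p ts cs gs"
    using assms(1) unfolding dpath_def by blast
  then have pres: "dpath_pres False K d \<gamma> p ts cs gs"
    unfolding dpath_pres_def by auto
  have unique: "l = pres_L1_length p ts cs gs"
    if "dpath_pres False K d \<gamma> p' ts' cs' gs'" "l = pres_L1_length p' ts' cs' gs'" for l p' ts' cs' gs'
    using logarithm_increment_eq_pres_L1_length[OF that(1) g log]
      logarithm_increment_eq_pres_L1_length[OF pres g log] that(2)
    by simp
  have "L1_length K d \<gamma> = pres_L1_length p ts cs gs"
    unfolding L1_length_def using pres unique by (intro the_equality) blast+
  then show ?thesis
    using logarithm_increment_eq_pres_L1_length[OF pres g log] by simp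
qed

lemma logarithm_increment_homotopy_invariant:
  fixes G :: "real \<times> real \<Rightarrow> complex"
  assumes G: "continuous_on ({0..1} \<times> {0..1}) G"
    and "\<And>s. s \<in> {0..1} \<Longrightarrow> exp (G (s, 0)) = 1" and "\<And>s. s \<in> {0..1} \<Longrightarrow> exp (G (s, 1)) = 1"
  shows "G (0, 1) - G (0, 0) = G (1, 1) - G (1, 0)"
proof -
  have "continuous_on {0..1} (\<lambda>s. G (s, 1) - G (s, 0))"
    by (intro continuous_on_diff continuous_on_compose2[OF G]) (auto intro!: continuous_intros)
  moreover have "exp (G (s, 1) - G (s, 0)) = 1" if "s \<in> {0..1}" for s
    using assms(2,3) that by (simp add: exp_diff)
  ultimately show ?thesis
    by (intro continuous_on_exp_eq_1_imp_eq[of "{0..1}" "\<lambda>s. G (s, 1) - G (s, 0)"]) auto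
qed

lemma realization_phase_homotopy_logarithm:
  fixes H :: "real \<Rightarrow> real \<Rightarrow> ((nat \<times> 'a) \<times> (nat \<Rightarrow> real)) set"
  assumes "precubical_set K d"
    and H: "continuous_map (top_of_set {0..1}) (compact_open_top (top_of_set {0..1}) (geom_top K d)) H"
  obtains G where "continuous_on ({0..1} \<times> {0..1}) G"
    and "\<And>s t. s \<in> {0..1} \<Longrightarrow> t \<in> {0..1} \<Longrightarrow> realization_phase (H s t) = exp (G (s, t))"
proof -
  let ?Q = "{0..1::real} \<times> {0..1::real}"
  have "continuous_map (top_of_set ?Q) (geom_top K d) (\<lambda>z. H (fst z) (snd z))"
    using closed_atLeastAtMost H by (rule continuous_map_uncurry_compact_open_top)
  then have "continuous_map (top_of_set ?Q) euclidean (realization_phase \<circ> (\<lambda>z. H (fst z) (snd z)))"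
    using continuous_map_realization_phase[OF assms(1)] by (rule continuous_map_compose)
  then have "continuous_on ?Q (\<lambda>z. realization_phase (H (fst z) (snd z)))"
    by (simp add: o_def)
  moreover have "contractible ?Q"
    by (simp add: convex_imp_contractible convex_Times)
  ultimately obtain G where "continuous_on ?Q G"
    and "\<And>z. z \<in> ?Q \<Longrightarrow> realization_phase (H (fst z) (snd z)) = exp (G z)"
    using continuous_logarithm_on_contractible realization_phase_nonzero by blast
  then show ?thesis
    using that by fastforce
qed

lemma L1_length_homotopy_invariant:
  fixes H :: "real \<Rightarrow> real \<Rightarrow> ((nat \<times> 'a) \<times> (nat \<Rightarrow> real)) set"
  assumes "precubical_set K d"
    and H: "continuous_map (top_of_set {0..1}) (compact_open_top (top_of_set {0..1}) (geom_top K d)) H"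
    and H_exec: "\<And>s. s \<in> {0..1} \<Longrightarrow> H s \<in> exec_paths K d \<alpha> \<beta>"
  shows "L1_length K d (H 0) = L1_length K d (H 1)"
proof -
  let ?I = "{0..1::real}"
  obtain G where G: "continuous_on (?I \<times> ?I) G"
    and log: "\<And>s t. s \<in> ?I \<Longrightarrow> t \<in> ?I \<Longrightarrow> realization_phase (H s t) = exp (G (s, t))"
    using realization_phase_homotopy_logarithm[OF assms(1) H] by blast
  have increment: "G (0, 1) - G (0, 0) = G (1, 1) - G (1, 0)"
  proof (rule logarithm_increment_homotopy_invariant[OF G])
    fix s assume s: "s \<in> ?I"
    then have "H s 0 = vertex_pt K d \<alpha>" "H s 1 = vertex_pt K d \<beta>"
      using H_exec unfolding exec_paths_def by auto
    then show "exp (G (s, 0)) = 1" "exp (G (s, 1)) = 1"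
      using log[OF s, of 0] log[OF s, of 1] by (simp_all add: realization_phase_vertex_pt)
  qed
  have L1: "of_real (2 * pi * L1_length K d (H s)) * \<i> = G (s, 1) - G (s, 0)" if s: "s \<in> ?I" for s
  proof (rule L1_length_eq_logarithm_increment[where g = "\<lambda>t. G (s, t)"])
    show "dpath True K d (H s)"
      using H_exec[OF s] unfolding exec_paths_def by blast
    show "continuous_on ?I (\<lambda>t. G (s, t))"
      using s by (intro continuous_on_compose2[OF G]) (auto intro!: continuous_intros)
    show "realization_phase (H s t) = exp (G (s, t))" if "t \<in> ?I" for t
      using log[OF s that] .
  qed
  have "of_real (2 * pi * L1_length K d (H 0)) * \<i> = (of_real (2 * pi * L1_length K d (H 1)) * \<i> :: complex)"
    using L1[of 0] L1[of 1] increment by simp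
  then show ?thesis
    by simp
qed

theorem proposition4p3:
  fixes K :: "nat \<Rightarrow> 'a set" and d :: "nat \<Rightarrow> nat \<Rightarrow> bool \<Rightarrow> 'a \<Rightarrow> 'a" and \<alpha> \<beta> :: 'a
    and \<gamma>1 \<gamma>2 :: "real \<Rightarrow> ((nat \<times> 'a) \<times> (nat \<Rightarrow> real)) set"
  assumes "precubical_set K d" and "\<alpha> \<in> K 0" and "\<beta> \<in> K 0"
    and "\<gamma>1 \<in> exec_paths K d \<alpha> \<beta>" and "\<gamma>2 \<in> exec_paths K d \<alpha> \<beta>"
    and "path_component_of (Ptop K d \<alpha> \<beta>) \<gamma>1 \<gamma>2"
  shows "L1_length K d \<gamma>1 = L1_length K d \<gamma>2"
proof -
  obtain H where H_path: "continuous_map (top_of_set {0..1::real}) (Ptop K d \<alpha> \<beta>) H"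
    and H01: "H 0 = \<gamma>1" "H 1 = \<gamma>2"
    using assms(6) unfolding path_component_of_def pathin_def by blast
  from H_path have H: "continuous_map (top_of_set {0..1})
      (subtopology (compact_open_top (top_of_set {0..1}) (geom_top K d)) (exec_paths K d \<alpha> \<beta>)) H"
    unfolding Ptop_def by (rule continuous_map_from_delta_kelley_target)
  have H_exec: "H s \<in> exec_paths K d \<alpha> \<beta>" if "s \<in> {0..1}" for s
    using H that unfolding continuous_map_def by auto
  have "L1_length K d (H 0) = L1_length K d (H 1)"
    using assms(1) continuous_map_into_fulltopology[OF H] H_exec by (rule L1_length_homotopy_invariant)
  then show ?thesis
    unfolding H01 .
qed

end
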